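(* Let $q\ge 1$ and $s\ge 3$ be integers, let $G=K_1\vee (C_s\cup qK_2)$ have $n\ge 16$ vertices, and let $H$ be a simple graph with the same $Q$-spectrum as $G$. Then $G$ and $H$ have the same degree sequence, and $H$ and $G$ contain the same number of triangles (subgraphs isomorphic to $C_3$).
   Context: Graphs are simple. $K_1\vee H$ adds one vertex adjacent to every vertex of $H$; $\cup$ is disjoint union; $qK_2$ is $q$ disjoint edges; $C_s$ is the cycle on $s$ vertices. The $Q$-spectrum of a graph is the multiset of eigenvalues of $Q=A+D$ (adjacency matrix plus diagonal degree matrix). *)

theory Defs
  imports "Jordan_Normal_Form.Char_Poly" "HOL-Computational_Algebra.Polynomial"
begin

definition simple_graph :: "nat \<Rightarrow> (nat \<Rightarrow> nat \<Rightarrow> bool) \<Rightarrow> bool" where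
  "simple_graph n E \<longleftrightarrow>
     (\<forall>i j. E i j \<longrightarrow> i < n \<and> j < n) \<and>
     (\<forall>i j. E i j \<longrightarrow> E j i) \<and> (\<forall>i. \<not> E i i)"

definition deg :: "nat \<Rightarrow> (nat \<Rightarrow> nat \<Rightarrow> bool) \<Rightarrow> nat \<Rightarrow> nat" where
  "deg n E i = card {j. j < n \<and> E i j}"

definition Q_matrix :: "nat \<Rightarrow> (nat \<Rightarrow> nat \<Rightarrow> bool) \<Rightarrow> complex mat" where
  "Q_matrix n E = mat n n (\<lambda>(i,j). if i = j then of_nat (deg n E i)
                                   else if E i j then 1 else 0)"

definition Q_spectrum :: "nat \<Rightarrow> (nat \<Rightarrow> nat \<Rightarrow> bool) \<Rightarrow> complex multiset" where
  "Q_spectrum n E = proots (char_poly (Q_matrix n E))"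

definition degree_sequence :: "nat \<Rightarrow> (nat \<Rightarrow> nat \<Rightarrow> bool) \<Rightarrow> nat multiset" where
  "degree_sequence n E = mset (map (deg n E) [0..<n])"

definition triangles :: "nat \<Rightarrow> (nat \<Rightarrow> nat \<Rightarrow> bool) \<Rightarrow> nat" where
  "triangles n E = card {T. T \<subseteq> {0..<n} \<and> card T = 3 \<and> (\<forall>x\<in>T. \<forall>y\<in>T. x \<noteq> y \<longrightarrow> E x y)}"

text \<open>K_1 \<vee> (C_s \<union> qK_2): vertex 0 is the cone vertex, vertices 1..s form the cycle
  (i ~ i+1, and s ~ 1), vertices s+1..s+2q are matched as (s+2k-1, s+2k), k = 1..q.\<close>
definition cycle_adj :: "nat \<Rightarrow> nat \<Rightarrow> nat \<Rightarrow> bool" where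
  "cycle_adj s i j \<longleftrightarrow> 1 \<le> i \<and> i \<le> s \<and> 1 \<le> j \<and> j \<le> s \<and>
     (j = i + 1 \<or> i = j + 1 \<or> (i = s \<and> j = 1) \<or> (i = 1 \<and> j = s))"

definition match_adj :: "nat \<Rightarrow> nat \<Rightarrow> nat \<Rightarrow> nat \<Rightarrow> bool" where
  "match_adj s q i j \<longleftrightarrow> (\<exists>k. 1 \<le> k \<and> k \<le> q \<and>
     ((i = s + 2*k - 1 \<and> j = s + 2*k) \<or> (j = s + 2*k - 1 \<and> i = s + 2*k)))"

definition cone_adj :: "nat \<Rightarrow> nat \<Rightarrow> nat \<Rightarrow> nat \<Rightarrow> bool" where
  "cone_adj s q i j \<longleftrightarrow> (i = 0 \<and> 1 \<le> j \<and> j \<le> s + 2*q) \<or> (j = 0 \<and> 1 \<le> i \<and> i \<le> s + 2*q)"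

definition G_adj :: "nat \<Rightarrow> nat \<Rightarrow> nat \<Rightarrow> nat \<Rightarrow> bool" where
  "G_adj s q i j \<longleftrightarrow> cone_adj s q i j \<or> cycle_adj s i j \<or> match_adj s q i j"

end

theory Submission
  imports Defs "Jordan_Normal_Form.Schur_Decomposition"
begin

text \<open>The traces of \<open>Q\<close>, \<open>Q\<^sup>2\<close> and \<open>Q\<^sup>3\<close> are determined by the \<open>Q\<close>-spectrum; for a
  simple graph they are \<open>\<Sum>d\<close>, \<open>\<Sum>d\<^sup>2 + \<Sum>d\<close> and \<open>\<Sum>d\<^sup>3 + 3\<Sum>d\<^sup>2 + 6t\<close>, where \<open>t\<close> counts
  triangles. Hence a graph \<open>H\<close> that is \<open>Q\<close>-cospectral with \<open>G = K\<^sub>1 \<or> (C\<^sub>s \<union> qK\<^sub>2)\<close> has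
  \<open>n = N + 1\<close> vertices and the same \<open>\<Sum>d\<close>, \<open>\<Sum>d\<^sup>2\<close> and \<open>\<Sum>d\<^sup>3 + 6t\<close> as \<open>G\<close>. Bounding
  \<open>6t\<close> above by \<open>\<Sum>d\<^sup>2 - \<Sum>d\<close> for \<open>H\<close> and below through the dominating vertex for \<open>G\<close>
  gives a lower bound on \<open>\<Sum>d\<^sup>3\<close> for \<open>H\<close>. The polynomial \<open>(d - 2)(d - 3)\<close> is
  nonnegative on the integers; over the degrees of \<open>H\<close> it sums to \<open>(N - 2)(N - 3)\<close>, and its
  sum weighted by \<open>N - d\<close> is then so small that some vertex must have degree \<open>N\<close> and all
  others degree \<open>2\<close> or \<open>3\<close>. The degree sum fixes the multiplicities, so the degree sequences
  agree, hence so do \<open>\<Sum>d\<^sup>3\<close> and the triangle counts.\<close>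

section \<open>Traces of matrix powers and eigenvalues\<close>

definition trace :: "'a::comm_ring_1 mat \<Rightarrow> 'a" where
  "trace A = (\<Sum>i<dim_row A. A $$ (i,i))"

lemma index_mult_mat_sum:
  assumes "A \<in> carrier_mat n m" "B \<in> carrier_mat m l" "i < n" "j < l"
  shows "(A * B) $$ (i,j) = (\<Sum>k<m. A $$ (i,k) * B $$ (k,j))"
  using assms by (simp add: scalar_prod_def lessThan_atLeast0)

lemma trace_mult_comm:
  assumes A: "A \<in> carrier_mat n m" and B: "B \<in> carrier_mat m n"
  shows "trace (A * B) = trace (B * A)"
proof -
  have "trace (A * B) = (\<Sum>i<n. \<Sum>k<m. A $$ (i,k) * B $$ (k,i))"
    using A B by (simp add: trace_def scalar_prod_def lessThan_atLeast0)
  also have "\<dots> = (\<Sum>k<m. \<Sum>i<n. B $$ (k,i) * A $$ (i,k))"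
    by (subst sum.swap) (simp add: mult.commute)
  also have "\<dots> = trace (B * A)"
    using A B by (simp add: trace_def scalar_prod_def lessThan_atLeast0)
  finally show ?thesis .
qed

lemma trace_similar_mat_wit:
  assumes "similar_mat_wit A B P Q"
  shows "trace A = trace B"
proof -
  define n where "n = dim_row A"
  from similar_mat_witD[OF n_def assms] have QP: "Q * P = 1\<^sub>m n" and AB: "A = P * B * Q"
    and B: "B \<in> carrier_mat n n" and P: "P \<in> carrier_mat n n" and Q: "Q \<in> carrier_mat n n"
    by auto
  have "trace A = trace (P * (B * Q))"
    unfolding AB by (simp only: assoc_mult_mat[OF P B Q])
  also have "\<dots> = trace (B * Q * P)"
    using P B Q by (intro trace_mult_comm[of _ n n]) auto
  also have "\<dots> = trace B"
    using B by (simp only: assoc_mult_mat[OF B Q P] QP right_mult_one_mat)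
  finally show ?thesis .
qed

lemma upper_triangular_mult_entry:
  assumes A: "A \<in> carrier_mat n n" and B: "B \<in> carrier_mat n n"
    and "upper_triangular A" "upper_triangular B" and "j \<le> i" "i < n"
  shows "(A * B) $$ (i,j) = (if i = j then A $$ (i,i) * B $$ (i,i) else 0)"
proof -
  have "(A * B) $$ (i,j) = (\<Sum>k<n. A $$ (i,k) * B $$ (k,j))"
    using assms by (intro index_mult_mat_sum) auto
  also have "\<dots> = (\<Sum>k<n. if k = i then (if i = j then A $$ (i,i) * B $$ (i,i) else 0) else 0)"
  proof (rule sum.cong[OF refl])
    fix k assume "k \<in> {..<n}"
    then show "A $$ (i,k) * B $$ (k,j) = (if k = i then (if i = j then A $$ (i,i) * B $$ (i,i) else 0) else 0)"
      using assms by (cases k i rule: linorder_cases) (auto simp: upper_triangular_def)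
  qed
  also have "\<dots> = (if i = j then A $$ (i,i) * B $$ (i,i) else 0)"
    using \<open>i < n\<close> by simp
  finally show ?thesis .
qed

lemma upper_triangular_power:
  assumes B: "B \<in> carrier_mat n n" and ut: "upper_triangular B"
  shows "upper_triangular (B ^\<^sub>m k) \<and> (\<forall>i<n. (B ^\<^sub>m k) $$ (i,i) = B $$ (i,i) ^ k)"
proof (induction k)
  case 0
  show ?case using B by auto
next
  case (Suc k)
  have Bk: "B ^\<^sub>m k \<in> carrier_mat n n" using B by simp
  have "(B ^\<^sub>m Suc k) $$ (i,j) = (if i = j then B $$ (i,i) ^ Suc k else 0)" if "j \<le> i" "i < n" for i j
    using upper_triangular_mult_entry[OF Bk B _ ut that] Suc that by (auto simp: power_commutes)
  then show ?case
    using B by auto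
qed

lemma proots_prod_linear_factors: "proots (\<Prod>a\<leftarrow>as. [:- a, 1:]) = mset (as :: 'a::idom list)"
proof (induction as)
  case (Cons a as)
  have "(\<Prod>a\<leftarrow>as. [:- a, 1:]) \<noteq> 0"
    by auto
  with Cons.IH show ?case
    by (simp add: proots_mult del: mult_pCons_left)
qed simp

lemma trace_power_eq_sum_proots:
  fixes A :: "complex mat"
  assumes A: "A \<in> carrier_mat n n"
  shows "trace (A ^\<^sub>m k) = (\<Sum>x\<in>#proots (char_poly A). x ^ k)"
proof -
  obtain as where cp: "char_poly A = (\<Prod>a\<leftarrow>as. [:- a, 1:])"
    using char_poly_factorized[OF A] by blast
  obtain B P Q where "schur_decomposition A as = (B, P, Q)"
    by (cases "schur_decomposition A as") auto
  with schur_decomposition[OF A cp] have wit: "similar_mat_wit A B P Q"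
    and ut: "upper_triangular B" and diag: "diag_mat B = as" by auto
  have B: "B \<in> carrier_mat n n" using similar_mat_witD2[OF A wit] by simp
  have "trace (A ^\<^sub>m k) = trace (B ^\<^sub>m k)"
    by (rule trace_similar_mat_wit[OF similar_mat_wit_pow[OF wit]])
  also have "\<dots> = (\<Sum>i<n. B $$ (i,i) ^ k)"
    using upper_triangular_power[OF B ut] B by (simp add: trace_def)
  also have "\<dots> = (\<Sum>x\<leftarrow>as. x ^ k)"
    using B by (simp add: diag[symmetric] diag_mat_def sum_list_sum_nth lessThan_atLeast0)
  also have "\<dots> = (\<Sum>x\<in>#proots (char_poly A). x ^ k)"
    unfolding cp proots_prod_linear_factors by (metis mset_map sum_mset_sum_list)
  finally show ?thesis .
qed

section \<open>Spectral moments of the signless Laplacian\<close>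

definition adj :: "(nat \<Rightarrow> nat \<Rightarrow> bool) \<Rightarrow> nat \<Rightarrow> nat \<Rightarrow> nat" where
  "adj E i j = of_bool (E i j)"

definition Q_entry :: "nat \<Rightarrow> (nat \<Rightarrow> nat \<Rightarrow> bool) \<Rightarrow> nat \<Rightarrow> nat \<Rightarrow> nat" where
  "Q_entry n E i j = (if i = j then deg n E i else adj E i j)"

definition closed_walks3 :: "nat \<Rightarrow> (nat \<Rightarrow> nat \<Rightarrow> bool) \<Rightarrow> nat" where
  "closed_walks3 n E = (\<Sum>i<n. \<Sum>k<n. \<Sum>l<n. adj E i k * adj E k l * adj E l i)"

lemma deg_eq_sum_adj: "deg n E i = (\<Sum>j<n. adj E i j)"
proof -
  have "(\<Sum>j<n. adj E i j) = card ({..<n} \<inter> {j. E i j})"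
    by (simp add: adj_def sum.If_cases)
  also have "{..<n} \<inter> {j. E i j} = {j. j < n \<and> E i j}" by auto
  finally show ?thesis by (simp add: deg_def)
qed

lemma Q_matrix_carrier: "Q_matrix n E \<in> carrier_mat n n"
  by (simp add: Q_matrix_def)

lemma Q_matrix_index: "i < n \<Longrightarrow> j < n \<Longrightarrow> Q_matrix n E $$ (i,j) = of_nat (Q_entry n E i j)"
  by (simp add: Q_matrix_def Q_entry_def adj_def)

lemma size_Q_spectrum: "size (Q_spectrum n E) = n"
  using degree_monic_char_poly[OF Q_matrix_carrier] by (simp add: Q_spectrum_def size_proots_complex)

lemma card_triples_enumerating_3_set:
  assumes "card T = 3"
  shows "card {(i, k, l). {i, k, l} = T} = 6"
proof -
  obtain x y z where T: "T = {x, y, z}" and "x \<noteq> y" "y \<noteq> z" "x \<noteq> z"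
    using assms by (auto simp: card_3_iff)
  then have "{(i, k, l). {i, k, l} = T} = {(x,y,z), (x,z,y), (y,x,z), (y,z,x), (z,x,y), (z,y,x)}"
  proof (intro equalityI subsetI)
    fix p assume "p \<in> {(i, k, l). {i, k, l} = T}"
    then obtain i k l where p: "p = (i, k, l)" and ikl: "{i, k, l} = {x, y, z}"
      using T by auto
    then have "card (set [i, k, l]) = length [i, k, l]"
      using \<open>x \<noteq> y\<close> \<open>y \<noteq> z\<close> \<open>x \<noteq> z\<close> by simp
    then have "distinct [i, k, l]"
      by (rule card_distinct)
    moreover have "i \<in> {x, y, z}" "k \<in> {x, y, z}" "l \<in> {x, y, z}"
      using ikl by blast+
    ultimately show "p \<in> {(x,y,z), (x,z,y), (y,x,z), (y,z,x), (z,x,y), (z,y,x)}"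
      unfolding p by auto
  qed (auto simp: T)
  then show ?thesis
    using \<open>x \<noteq> y\<close> \<open>y \<noteq> z\<close> \<open>x \<noteq> z\<close> by simp
qed

context
  fixes n E assumes simple: "simple_graph n E"
begin

lemma adj_sym: "adj E i j = adj E j i"
  using simple by (auto simp: simple_graph_def adj_def)

lemma adj_irrefl [simp]: "adj E i i = 0"
  using simple by (auto simp: simple_graph_def adj_def)

lemma deg_le_n_minus_1:
  assumes "i < n"
  shows "deg n E i \<le> n - 1"
proof -
  have "{j. j < n \<and> E i j} \<subseteq> {..<n} - {i}"
    using simple by (auto simp: simple_graph_def)
  then have "deg n E i \<le> card ({..<n} - {i})"
    unfolding deg_def by (intro card_mono) auto
  then show ?thesis
    using assms by simp
qed

lemma Q_entry_sym: "Q_entry n E i j = Q_entry n E j i"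
  by (simp add: Q_entry_def adj_sym)

lemma sum_Q_entry_row:
  assumes "i < n"
  shows "(\<Sum>k<n. Q_entry n E i k * X k) = deg n E i * X i + (\<Sum>k<n. adj E i k * X k)"
proof -
  have "Q_entry n E i k * X k = (if k = i then deg n E i * X i else 0) + adj E i k * X k" for k
    by (simp add: Q_entry_def)
  then show ?thesis
    using assms by (simp add: sum.distrib)
qed

lemma sum_Q_entry_col:
  assumes "i < n"
  shows "(\<Sum>k<n. X k * Q_entry n E k i) = X i * deg n E i + (\<Sum>k<n. X k * adj E k i)"
  using sum_Q_entry_row[OF assms, of X] by (simp add: Q_entry_sym adj_sym mult.commute)

lemma adj_mult_Q_entry: "adj E i k * Q_entry n E k i = adj E i k"
  using simple by (auto simp: Q_entry_def adj_def simple_graph_def)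

lemma Q_square_diag:
  assumes "i < n"
  shows "(\<Sum>k<n. Q_entry n E i k * Q_entry n E k i) = deg n E i ^ 2 + deg n E i"
proof -
  have "(\<Sum>k<n. Q_entry n E i k * Q_entry n E k i)
      = deg n E i * Q_entry n E i i + (\<Sum>k<n. adj E i k * Q_entry n E k i)"
    by (rule sum_Q_entry_row[OF assms])
  also have "(\<Sum>k<n. adj E i k * Q_entry n E k i) = deg n E i"
    by (simp add: adj_mult_Q_entry deg_eq_sum_adj)
  finally show ?thesis
    by (simp add: Q_entry_def power2_eq_square)
qed

lemma Q_square_entry_adjacent:
  assumes "i < n"
  shows "adj E i k * (\<Sum>l<n. Q_entry n E k l * Q_entry n E l i)
    = adj E i k * (deg n E k + deg n E i + (\<Sum>l<n. adj E k l * adj E l i))"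
proof (cases "E i k")
  case True
  then have k: "k < n" and "k \<noteq> i" and "adj E k i = 1"
    using simple by (auto simp: simple_graph_def adj_def)
  then have "(\<Sum>l<n. Q_entry n E k l * Q_entry n E l i)
      = deg n E k + deg n E i + (\<Sum>l<n. adj E k l * adj E l i)"
    using sum_Q_entry_row[OF k] sum_Q_entry_col[OF assms] by (simp add: Q_entry_def)
  then show ?thesis by simp
qed (simp add: adj_def)

lemma sum_adj_mult_deg: "(\<Sum>i<n. \<Sum>k<n. adj E i k * deg n E k) = (\<Sum>k<n. deg n E k ^ 2)"
proof -
  have "(\<Sum>i<n. \<Sum>k<n. adj E i k * deg n E k) = (\<Sum>k<n. (\<Sum>i<n. adj E k i) * deg n E k)"
    by (subst sum.swap) (simp add: adj_sym sum_distrib_right)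
  then show ?thesis
    by (simp add: deg_eq_sum_adj[symmetric] power2_eq_square)
qed

lemma Q_cube_diag:
  assumes i: "i < n"
  shows "(\<Sum>k<n. \<Sum>l<n. Q_entry n E i k * Q_entry n E k l * Q_entry n E l i)
    = deg n E i ^ 3 + 2 * deg n E i ^ 2 + (\<Sum>k<n. adj E i k * deg n E k)
      + (\<Sum>k<n. \<Sum>l<n. adj E i k * adj E k l * adj E l i)"
proof -
  have "(\<Sum>k<n. \<Sum>l<n. Q_entry n E i k * Q_entry n E k l * Q_entry n E l i)
      = (\<Sum>k<n. Q_entry n E i k * (\<Sum>l<n. Q_entry n E k l * Q_entry n E l i))"
    by (simp add: sum_distrib_left mult.assoc)
  also have "\<dots> = deg n E i * (\<Sum>l<n. Q_entry n E i l * Q_entry n E l i)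
      + (\<Sum>k<n. adj E i k * (\<Sum>l<n. Q_entry n E k l * Q_entry n E l i))"
    by (rule sum_Q_entry_row[OF i])
  also have "\<dots> = deg n E i * (deg n E i ^ 2 + deg n E i)
      + (\<Sum>k<n. adj E i k * (deg n E k + deg n E i + (\<Sum>l<n. adj E k l * adj E l i)))"
    by (simp only: Q_square_diag[OF i] Q_square_entry_adjacent[OF i])
  also have "(\<Sum>k<n. adj E i k * (deg n E k + deg n E i + (\<Sum>l<n. adj E k l * adj E l i)))
      = (\<Sum>k<n. adj E i k * deg n E k) + (\<Sum>k<n. adj E i k) * deg n E i
        + (\<Sum>k<n. \<Sum>l<n. adj E i k * adj E k l * adj E l i)"
    by (simp add: distrib_left sum.distrib sum_distrib_left sum_distrib_right mult.assoc)
  finally show ?thesis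
    by (simp add: deg_eq_sum_adj[symmetric] algebra_simps power2_eq_square power3_eq_cube)
qed

lemma trace_Q_matrix: "trace (Q_matrix n E) = of_nat (\<Sum>i<n. deg n E i)"
  using Q_matrix_carrier[of n E] by (simp add: trace_def Q_matrix_index Q_entry_def)

lemma trace_Q_matrix_power_2:
  "trace (Q_matrix n E ^\<^sub>m 2) = of_nat ((\<Sum>i<n. deg n E i ^ 2) + (\<Sum>i<n. deg n E i))"
proof -
  let ?Q = "Q_matrix n E" and ?q = "Q_entry n E"
  have Q: "?Q \<in> carrier_mat n n" by (rule Q_matrix_carrier)
  have "trace (?Q ^\<^sub>m 2) = (\<Sum>i<n. (?Q * ?Q) $$ (i,i))"
    using Q by (simp add: trace_def numeral_2_eq_2)
  also have "\<dots> = (\<Sum>i<n. \<Sum>k<n. of_nat (?q i k * ?q k i))"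
    by (intro sum.cong refl) (simp add: index_mult_mat_sum[OF Q Q] Q_matrix_index del: index_mult_mat)
  also have "\<dots> = of_nat (\<Sum>i<n. \<Sum>k<n. ?q i k * ?q k i)"
    by simp
  also have "(\<Sum>i<n. \<Sum>k<n. ?q i k * ?q k i) = (\<Sum>i<n. deg n E i ^ 2) + (\<Sum>i<n. deg n E i)"
    by (simp add: Q_square_diag sum.distrib)
  finally show ?thesis .
qed

lemma trace_Q_matrix_power_3:
  "trace (Q_matrix n E ^\<^sub>m 3)
    = of_nat ((\<Sum>i<n. deg n E i ^ 3) + 3 * (\<Sum>i<n. deg n E i ^ 2) + closed_walks3 n E)"
proof -
  let ?Q = "Q_matrix n E" and ?q = "Q_entry n E"
  have Q: "?Q \<in> carrier_mat n n" by (rule Q_matrix_carrier)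
  have QQ: "?Q * ?Q \<in> carrier_mat n n" using Q by simp
  have "trace (?Q ^\<^sub>m 3) = (\<Sum>i<n. (?Q * ?Q * ?Q) $$ (i,i))"
    using Q by (simp add: trace_def numeral_3_eq_3)
  also have "\<dots> = (\<Sum>i<n. \<Sum>k<n. \<Sum>l<n. of_nat (?q i l * ?q l k * ?q k i))"
    by (intro sum.cong refl) (simp add: index_mult_mat_sum[OF QQ Q] index_mult_mat_sum[OF Q Q]
        Q_matrix_index sum_distrib_right del: index_mult_mat)
  also have "\<dots> = (\<Sum>i<n. \<Sum>k<n. \<Sum>l<n. of_nat (?q i k * ?q k l * ?q l i))"
    by (intro sum.cong refl sum.swap)
  also have "\<dots> = of_nat (\<Sum>i<n. \<Sum>k<n. \<Sum>l<n. ?q i k * ?q k l * ?q l i)"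
    by simp
  also have "(\<Sum>i<n. \<Sum>k<n. \<Sum>l<n. ?q i k * ?q k l * ?q l i)
      = (\<Sum>i<n. deg n E i ^ 3) + 3 * (\<Sum>i<n. deg n E i ^ 2) + closed_walks3 n E"
    by (simp add: Q_cube_diag sum.distrib sum_adj_mult_deg closed_walks3_def
        flip: sum_distrib_left)
  finally show ?thesis .
qed

text \<open>A closed 3-walk from \<open>i\<close> is determined by an ordered pair of distinct neighbours of \<open>i\<close>.\<close>
lemma closed_walks3_at_vertex_le:
  "(\<Sum>k<n. \<Sum>l<n. adj E i k * adj E k l * adj E l i) + deg n E i \<le> deg n E i ^ 2"
proof -
  have "adj E i k * adj E k l * adj E l i + (if l = k then adj E i k * adj E k i else 0)
      \<le> adj E i k * adj E i l" for k l
    using simple by (auto simp: adj_def simple_graph_def)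
  then have "(\<Sum>k<n. \<Sum>l<n. adj E i k * adj E k l * adj E l i + (if l = k then adj E i k * adj E k i else 0))
      \<le> (\<Sum>k<n. \<Sum>l<n. adj E i k * adj E i l)"
    by (intro sum_mono)
  moreover have "(\<Sum>k<n. adj E i k * adj E k i) = deg n E i"
    using simple by (simp add: deg_eq_sum_adj adj_def simple_graph_def)
  ultimately show ?thesis
    by (simp add: sum.distrib deg_eq_sum_adj power2_eq_square sum_product)
qed

lemma closed_walks3_le_sum_deg_sq:
  "closed_walks3 n E + (\<Sum>i<n. deg n E i) \<le> (\<Sum>i<n. deg n E i ^ 2)"
  using sum_mono[of "{..<n}", OF closed_walks3_at_vertex_le]
  by (simp add: closed_walks3_def sum.distrib)

text \<open>The vertices of a closed 3-walk are distinct, so a walk through \<open>v\<close> is counted once for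
  each of the three rotations that put \<open>v\<close> at a different position.\<close>
lemma closed_walks3_ge_through_vertex:
  assumes v: "v < n"
  shows "3 * (\<Sum>k<n. \<Sum>l<n. adj E v k * adj E k l * adj E l v) \<le> closed_walks3 n E"
proof -
  define T where "T i k l = adj E i k * adj E k l * adj E l i" for i k l
  have "(if i = v then T i k l else 0) + (if k = v then T i k l else 0) + (if l = v then T i k l else 0)
      \<le> T i k l" for i k l
    by (auto simp: T_def)
  then have "(\<Sum>i<n. \<Sum>k<n. \<Sum>l<n. (if i = v then T i k l else 0) + (if k = v then T i k l else 0)
      + (if l = v then T i k l else 0)) \<le> closed_walks3 n E"
    unfolding closed_walks3_def T_def[symmetric] by (intro sum_mono)
  moreover have "(\<Sum>i<n. \<Sum>k<n. \<Sum>l<n. if i = v then T i k l else 0) = (\<Sum>k<n. \<Sum>l<n. T v k l)"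
  proof -
    have "(\<Sum>k<n. \<Sum>l<n. if i = v then T i k l else 0) = (if i = v then \<Sum>k<n. \<Sum>l<n. T v k l else 0)" for i
      by (cases "i = v") simp_all
    then show ?thesis using v by simp
  qed
  moreover have "(\<Sum>i<n. \<Sum>k<n. \<Sum>l<n. if k = v then T i k l else 0) = (\<Sum>k<n. \<Sum>l<n. T v k l)"
  proof -
    have "(\<Sum>l<n. if k = v then T i k l else 0) = (if k = v then \<Sum>l<n. T i v l else 0)" for i k
      by (cases "k = v") simp_all
    then have "(\<Sum>i<n. \<Sum>k<n. \<Sum>l<n. if k = v then T i k l else 0) = (\<Sum>i<n. \<Sum>l<n. T v l i)"
      using v by (simp add: T_def mult_ac)
    also have "\<dots> = (\<Sum>k<n. \<Sum>l<n. T v k l)"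
      by (rule sum.swap)
    finally show ?thesis .
  qed
  moreover have "(\<Sum>i<n. \<Sum>k<n. \<Sum>l<n. if l = v then T i k l else 0) = (\<Sum>k<n. \<Sum>l<n. T v k l)"
    using v by (simp add: T_def mult_ac)
  ultimately show ?thesis
    by (simp add: sum.distrib T_def)
qed

lemma sum_deg_with_dominating_vertex:
  assumes v: "v < n" and dominating: "\<And>j. j < n \<Longrightarrow> j \<noteq> v \<Longrightarrow> E v j"
  shows "(\<Sum>i<n. deg n E i) = (\<Sum>k<n. \<Sum>l<n. adj E v k * adj E k l * adj E l v) + 2 * (n - 1)"
proof -
  have irrefl: "\<not> E v v"
    using simple by (simp add: simple_graph_def)
  have adj_from_v: "adj E v i = (if i = v then 0 else 1)" if "i < n" for i
    using dominating[OF that] irrefl by (simp add: adj_def)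
  \<comment> \<open>an edge either avoids \<open>v\<close>, and then closes a triangle with \<open>v\<close>, or meets \<open>v\<close>\<close>
  have split: "adj E i l = adj E v i * adj E i l * adj E l v
      + (if i = v then adj E i l else 0) + (if l = v then adj E i l else 0)" if "i < n" "l < n" for i l
    using that by (cases "i = v"; cases "l = v") (simp_all add: adj_from_v adj_sym[of l v])
  have "{j. j < n \<and> E v j} = {..<n} - {v}"
    using dominating irrefl by auto
  then have deg_v: "deg n E v = n - 1"
    using v by (simp add: deg_def)
  have "(\<Sum>i<n. deg n E i) = (\<Sum>i<n. \<Sum>l<n. adj E i l)"
    by (simp add: deg_eq_sum_adj)
  also have "\<dots> = (\<Sum>i<n. \<Sum>l<n. adj E v i * adj E i l * adj E l v
      + (if i = v then adj E i l else 0) + (if l = v then adj E i l else 0))"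
    by (intro sum.cong refl split) auto
  also have "\<dots> = (\<Sum>k<n. \<Sum>l<n. adj E v k * adj E k l * adj E l v) + deg n E v + deg n E v"
  proof -
    have "(\<Sum>l<n. if i = v then adj E i l else 0) = (if i = v then deg n E v else 0)" for i
      by (cases "i = v") (simp_all add: deg_eq_sum_adj)
    moreover have "(\<Sum>i<n. adj E i v) = deg n E v"
      by (simp add: deg_eq_sum_adj adj_sym[of _ v])
    ultimately show ?thesis
      using v by (simp add: sum.distrib)
  qed
  finally show ?thesis
    using deg_v by simp
qed

lemma closed_walks3_ge_dominating_vertex:
  assumes "v < n" and "\<And>j. j < n \<Longrightarrow> j \<noteq> v \<Longrightarrow> E v j"
  shows "3 * (\<Sum>i<n. deg n E i) \<le> closed_walks3 n E + 6 * (n - 1)"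
  using sum_deg_with_dominating_vertex[OF assms] closed_walks3_ge_through_vertex[OF assms(1)] by simp

lemma closed_walks3_eq_card: "closed_walks3 n E
    = card {(i, k, l). i < n \<and> k < n \<and> l < n \<and> E i k \<and> E k l \<and> E l i}"
proof -
  let ?P = "\<lambda>i k l. E i k \<and> E k l \<and> E l i"
  have "closed_walks3 n E = (\<Sum>i<n. \<Sum>k<n. \<Sum>l<n. if ?P i k l then 1 else 0)"
    unfolding closed_walks3_def adj_def by (intro sum.cong refl) auto
  also have "\<dots> = (\<Sum>(i, k, l) \<in> {..<n} \<times> {..<n} \<times> {..<n}. if ?P i k l then 1 else 0)"
    by (simp only: sum.cartesian_product)
  also have "\<dots> = card ({..<n} \<times> {..<n} \<times> {..<n} \<inter> {p. ?P (fst p) (fst (snd p)) (snd (snd p))})"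
    by (simp add: sum.If_cases case_prod_beta)
  also have "{..<n} \<times> {..<n} \<times> {..<n} \<inter> {p. ?P (fst p) (fst (snd p)) (snd (snd p))}
      = {(i, k, l). i < n \<and> k < n \<and> l < n \<and> ?P i k l}"
    by auto
  finally show ?thesis .
qed

lemma closed_walks3_eq_triangles: "closed_walks3 n E = 6 * triangles n E"
proof -
  define TS where "TS = {T. T \<subseteq> {0..<n} \<and> card T = 3 \<and> (\<forall>x\<in>T. \<forall>y\<in>T. x \<noteq> y \<longrightarrow> E x y)}"
  have sym: "E x y \<Longrightarrow> E y x" and irrefl: "\<not> E x x" for x y
    using simple by (auto simp: simple_graph_def)
  have distinct_iff: "card {i, k, l} = 3 \<longleftrightarrow> i \<noteq> k \<and> k \<noteq> l \<and> l \<noteq> i" for i k l :: nat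
    by (auto simp: card_insert_if)
  have "{(i, k, l). i < n \<and> k < n \<and> l < n \<and> E i k \<and> E k l \<and> E l i}
      = (\<Union>T\<in>TS. {(i, k, l). {i, k, l} = T})"
  proof (intro equalityI subsetI)
    fix p assume "p \<in> {(i, k, l). i < n \<and> k < n \<and> l < n \<and> E i k \<and> E k l \<and> E l i}"
    then obtain i k l where p: "p = (i, k, l)" and walk: "i < n" "k < n" "l < n" "E i k" "E k l" "E l i"
      by auto
    moreover have "E k i" "E l k" "E i l"
      using walk sym by blast+
    ultimately have "{i, k, l} \<in> TS"
      using irrefl by (auto simp: TS_def distinct_iff)
    then show "p \<in> (\<Union>T\<in>TS. {(i, k, l). {i, k, l} = T})"
      using p by blast
  next
    fix p assume "p \<in> (\<Union>T\<in>TS. {(i, k, l). {i, k, l} = T})"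
    then obtain i k l where "p = (i, k, l)" and "{i, k, l} \<in> TS"
      by auto
    then show "p \<in> {(i, k, l). i < n \<and> k < n \<and> l < n \<and> E i k \<and> E k l \<and> E l i}"
      by (auto simp: TS_def distinct_iff)
  qed
  then have "closed_walks3 n E = card (\<Union>T\<in>TS. {(i, k, l). {i, k, l} = T})"
    by (simp add: closed_walks3_eq_card)
  also have "\<dots> = (\<Sum>T\<in>TS. card {(i, k, l). {i, k, l} = T})"
  proof (rule card_UN_disjoint)
    show "finite TS"
      by (rule finite_subset[of _ "Pow {0..<n}"]) (auto simp: TS_def)
    show "\<forall>T\<in>TS. finite {(i, k, l). {i, k, l} = T}"
      by (auto intro: finite_subset[of _ "{0..<n} \<times> {0..<n} \<times> {0..<n}"] simp: TS_def)
  qed auto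
  also have "\<dots> = 6 * card TS"
    by (simp add: TS_def card_triples_enumerating_3_set)
  finally show ?thesis
    by (simp add: triangles_def TS_def)
qed

end

lemma Q_cospectral_degree_moments:
  assumes E: "simple_graph m E" and F: "simple_graph n F"
    and cospectral: "Q_spectrum m E = Q_spectrum n F"
  shows "m = n"
    and "(\<Sum>i<m. deg m E i) = (\<Sum>i<n. deg n F i)"
    and "(\<Sum>i<m. deg m E i ^ 2) = (\<Sum>i<n. deg n F i ^ 2)"
    and "(\<Sum>i<m. deg m E i ^ 3) + closed_walks3 m E = (\<Sum>i<n. deg n F i ^ 3) + closed_walks3 n F"
proof -
  show "m = n"
    using arg_cong[OF cospectral, of size] by (simp add: size_Q_spectrum)
  have traces: "trace (Q_matrix m E ^\<^sub>m k) = trace (Q_matrix n F ^\<^sub>m k)" for k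
    using cospectral by (simp add: Q_spectrum_def trace_power_eq_sum_proots[OF Q_matrix_carrier])
  have "trace (Q_matrix m E) = trace (Q_matrix n F)"
    using traces[of 1] by simp
  then show sum1: "(\<Sum>i<m. deg m E i) = (\<Sum>i<n. deg n F i)"
    unfolding trace_Q_matrix[OF E] trace_Q_matrix[OF F] of_nat_eq_iff .
  have "(\<Sum>i<m. deg m E i ^ 2) + (\<Sum>i<m. deg m E i) = (\<Sum>i<n. deg n F i ^ 2) + (\<Sum>i<n. deg n F i)"
    using traces[of 2] unfolding trace_Q_matrix_power_2[OF E] trace_Q_matrix_power_2[OF F] of_nat_eq_iff .
  with sum1 show sum2: "(\<Sum>i<m. deg m E i ^ 2) = (\<Sum>i<n. deg n F i ^ 2)"
    by simp
  have "(\<Sum>i<m. deg m E i ^ 3) + 3 * (\<Sum>i<m. deg m E i ^ 2) + closed_walks3 m E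
      = (\<Sum>i<n. deg n F i ^ 3) + 3 * (\<Sum>i<n. deg n F i ^ 2) + closed_walks3 n F"
    using traces[of 3] unfolding trace_Q_matrix_power_3[OF E] trace_Q_matrix_power_3[OF F] of_nat_eq_iff .
  with sum2 show "(\<Sum>i<m. deg m E i ^ 3) + closed_walks3 m E = (\<Sum>i<n. deg n F i ^ 3) + closed_walks3 n F"
    by simp
qed

section \<open>Degree sequences\<close>

lemma degree_sequence_eq_image_mset: "degree_sequence n E = image_mset (deg n E) (mset_set {..<n})"
  by (simp add: degree_sequence_def mset_set_upto_eq_mset_upto)

lemma sum_degree_sequence: "(\<Sum>d\<in>#degree_sequence n E. f d) = (\<Sum>i<n. f (deg n E i))"
  by (simp add: degree_sequence_eq_image_mset sum_unfold_sum_mset multiset.map_comp o_def)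

lemma mset_two_values_eq:
  fixes M :: "nat multiset"
  assumes two_values: "set_mset M \<subseteq> {a, b}" and "a < b"
    and size: "size M = x + y" and sum: "sum_mset M = a * x + b * y"
  shows "M = replicate_mset x a + replicate_mset y b"
proof -
  define ca cb where "ca = count M a" and "cb = count M b"
  have M: "M = replicate_mset ca a + replicate_mset cb b"
  proof (rule multiset_eqI)
    fix z
    show "count M z = count (replicate_mset ca a + replicate_mset cb b) z"
      using two_values \<open>a < b\<close> by (cases "z \<in># M") (auto simp: ca_def cb_def not_in_iff)
  qed
  have "size M = ca + cb" and "sum_mset M = a * ca + b * cb"
    by (subst M; simp)+
  then have counts: "ca + cb = x + y" and weights: "a * ca + b * cb = a * x + b * y"
    using size sum by simp_all
  have "int a * (int ca - int x) + int b * (int cb - int y) = 0"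
    using arg_cong[OF weights, of int] by (simp add: algebra_simps)
  moreover have "int ca - int x = - (int cb - int y)"
    using counts by linarith
  ultimately have "(int b - int a) * (int cb - int y) = 0"
    by (simp add: algebra_simps)
  then have "cb = y" and "ca = x"
    using \<open>a < b\<close> counts by simp_all
  then show ?thesis
    using M by simp
qed

lemma degree_sequence_hub_two_values:
  assumes hub: "h < n" and two_values: "\<And>i. i < n \<Longrightarrow> i \<noteq> h \<Longrightarrow> deg n E i \<in> {a, b}" and "a < b"
    and size: "n = x + y + 1" and sum: "(\<Sum>i<n. deg n E i) = deg n E h + a * x + b * y"
  shows "degree_sequence n E = add_mset (deg n E h) (replicate_mset x a + replicate_mset y b)"
proof -
  define M where "M = image_mset (deg n E) (mset_set ({..<n} - {h}))"
  have "degree_sequence n E = add_mset (deg n E h) M"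
    using hub by (simp add: M_def degree_sequence_eq_image_mset mset_set.remove)
  moreover have "M = replicate_mset x a + replicate_mset y b"
  proof (rule mset_two_values_eq[OF _ \<open>a < b\<close>])
    show "set_mset M \<subseteq> {a, b}"
      using two_values by (auto simp: M_def)
    show "size M = x + y"
      using hub size by (simp add: M_def)
    show "sum_mset M = a * x + b * y"
      using hub sum by (simp add: M_def sum_unfold_sum_mset[symmetric] sum.remove)
  qed
  ultimately show ?thesis by simp
qed

section \<open>The cone over a cycle and a matching\<close>

context
  fixes s q n :: nat
  assumes s: "3 \<le> s" and n: "n = 1 + s + 2 * q"
begin

lemma G_simple: "simple_graph n (G_adj s q)"
  using s n unfolding simple_graph_def G_adj_def cone_adj_def cycle_adj_def match_adj_def by auto

lemma G_neighbours_hub: "{j. j < n \<and> G_adj s q 0 j} = {1..s + 2 * q}"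
  using n by (auto simp: G_adj_def cone_adj_def cycle_adj_def match_adj_def)

lemma G_deg_cycle:
  assumes "1 \<le> i" "i \<le> s"
  shows "deg n (G_adj s q) i = 3"
proof -
  have "G_adj s q i j \<longleftrightarrow> j = 0 \<or> cycle_adj s i j" for j
    using assms n by (auto simp: G_adj_def cone_adj_def match_adj_def)
  then have neighbours: "{j. j < n \<and> G_adj s q i j} = {j. j < n \<and> (j = 0 \<or> cycle_adj s i j)}"
    by auto
  consider "i = 1" | "i = s" | "1 < i \<and> i < s"
    using assms by linarith
  then show ?thesis
  proof cases
    case 1
    then have "{j. j < n \<and> (j = 0 \<or> cycle_adj s i j)} = {0, 2, s}"
      using s n by (auto simp: cycle_adj_def)
    then show ?thesis using s neighbours by (simp add: deg_def)
  next
    case 2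
    then have "{j. j < n \<and> (j = 0 \<or> cycle_adj s i j)} = {0, s - 1, 1}"
      using s n by (auto simp: cycle_adj_def)
    then show ?thesis using s neighbours by (simp add: deg_def)
  next
    case 3
    then have "{j. j < n \<and> (j = 0 \<or> cycle_adj s i j)} = {0, i - 1, i + 1}"
      using s n by (auto simp: cycle_adj_def)
    then show ?thesis using 3 neighbours by (simp add: deg_def)
  qed
qed

lemma match_adj_iff_partner:
  assumes i: "s < i" "i \<le> s + 2 * q"
  shows "match_adj s q i j \<longleftrightarrow> j = (if odd (i - s) then i + 1 else i - 1)"
proof
  assume "match_adj s q i j"
  then obtain k where k: "1 \<le> k" "k \<le> q"
    "(i = s + 2 * k - 1 \<and> j = s + 2 * k) \<or> (j = s + 2 * k - 1 \<and> i = s + 2 * k)"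
    by (auto simp: match_adj_def)
  from k(3) show "j = (if odd (i - s) then i + 1 else i - 1)"
  proof
    assume h: "i = s + 2 * k - 1 \<and> j = s + 2 * k"
    then have "i - s = 2 * (k - 1) + 1"
      using k(1) by simp
    then show ?thesis
      using h k(1) by simp
  next
    assume h: "j = s + 2 * k - 1 \<and> i = s + 2 * k"
    then have "i - s = 2 * k"
      by simp
    then show ?thesis
      using h k(1) by simp
  qed
next
  assume j: "j = (if odd (i - s) then i + 1 else i - 1)"
  show "match_adj s q i j"
  proof (cases "odd (i - s)")
    case True
    then obtain k where "i - s = 2 * k + 1"
      by (rule oddE)
    then show ?thesis
      unfolding match_adj_def using True i j by (intro exI[of _ "k + 1"]) auto
  next
    case False
    then obtain k where "i - s = 2 * k"
      by (meson evenE)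
    then show ?thesis
      unfolding match_adj_def using False i j by (intro exI[of _ k]) auto
  qed
qed

lemma G_deg_matching:
  assumes "s < i" "i < n"
  shows "deg n (G_adj s q) i = 2"
proof -
  define p where "p = (if odd (i - s) then i + 1 else i - 1)"
  have i: "s < i" "i \<le> s + 2 * q"
    using assms n by simp_all
  have "p < n" and "p \<noteq> 0"
  proof -
    show "p \<noteq> 0"
      using i s by (simp add: p_def)
    have "odd (i - s) \<Longrightarrow> i \<noteq> s + 2 * q"
      using i by auto
    then show "p < n"
      using i n by (auto simp: p_def)
  qed
  moreover have "\<not> cycle_adj s i j" for j
    using i by (simp add: cycle_adj_def)
  ultimately have "{j. j < n \<and> G_adj s q i j} = {0, p}"
    using i n by (auto simp: G_adj_def cone_adj_def match_adj_iff_partner p_def)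
  with \<open>p \<noteq> 0\<close> show ?thesis
    by (simp add: deg_def)
qed

lemma degree_sequence_G:
  "degree_sequence n (G_adj s q) = add_mset (s + 2 * q) (replicate_mset (2 * q) 2 + replicate_mset s 3)"
proof -
  have "[1..<s + 1 + 2 * q] = [1..<s + 1] @ [s + 1..<s + 1 + 2 * q]"
    by (rule upt_add_eq_append) simp
  then have upt: "[0..<n] = 0 # [1..<s + 1] @ [s + 1..<n]"
    using n by (simp add: upt_conv_Cons del: upt_Suc)
  have "map (deg n (G_adj s q)) [1..<s + 1] = map (\<lambda>_. 3) [1..<s + 1]"
    by (rule map_cong) (auto intro: G_deg_cycle)
  then have cycle: "map (deg n (G_adj s q)) [1..<s + 1] = replicate s 3"
    by (simp add: map_replicate_const)
  have "map (deg n (G_adj s q)) [s + 1..<n] = map (\<lambda>_. 2) [s + 1..<n]"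
    by (rule map_cong) (auto intro: G_deg_matching)
  moreover have "n - (s + 1) = 2 * q"
    using n by simp
  ultimately have matching: "map (deg n (G_adj s q)) [s + 1..<n] = replicate (2 * q) 2"
    by (simp add: map_replicate_const)
  have "deg n (G_adj s q) 0 = s + 2 * q"
    by (simp add: deg_def G_neighbours_hub)
  with cycle matching show ?thesis
    by (simp add: degree_sequence_def upt)
qed

end

section \<open>An integer moment inequality\<close>

lemma at_most_one_large_term:
  fixes f :: "nat \<Rightarrow> int"
  assumes nonneg: "\<And>i. i < n \<Longrightarrow> 0 \<le> f i" and sum: "(\<Sum>i<n. f i) < 2 * c"
    and B: "B \<subseteq> {..<n}" and large: "\<And>i. i \<in> B \<Longrightarrow> c \<le> f i"
  shows "card B \<le> 1"
proof (rule ccontr)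
  assume "\<not> card B \<le> 1"
  moreover have "finite B"
    using B finite_subset by blast
  ultimately obtain i j where ij: "i \<in> B" "j \<in> B" "i \<noteq> j"
    by (auto simp: card_le_Suc0_iff_eq)
  then have "f i + f j = (\<Sum>k\<in>{i, j}. f k)"
    by simp
  also have "\<dots> \<le> (\<Sum>k<n. f k)"
    using ij B nonneg by (intro sum_mono2) auto
  finally show False
    using sum large[OF ij(1)] large[OF ij(2)] by linarith
qed

lemma quadratic_2_3_nonneg: "0 \<le> ((x :: int) - 2) * (x - 3)"
  by (cases "x \<le> 2") (auto intro: mult_nonpos_nonpos mult_nonneg_nonneg)

text \<open>If no vertex had the maximal degree \<open>N\<close>, the weights \<open>N - x\<^sub>i\<close> would be at least \<open>4\<close>
  except for at most one vertex of degree \<open>\<ge> N - 3\<close>, which makes the weighted sum too large.\<close>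
lemma weighted_quadratic_sum_ge:
  fixes x :: "nat \<Rightarrow> int" and N :: int
  assumes N: "15 \<le> N" and below: "\<And>i. i < n \<Longrightarrow> x i < N"
    and sum: "(\<Sum>i<n. (x i - 2) * (x i - 3)) = (N - 2) * (N - 3)"
  shows "(N - 3) * (N + 4) \<le> (\<Sum>i<n. (x i - 2) * (x i - 3) * (N - x i))"
proof -
  define f where "f i = (x i - 2) * (x i - 3)" for i
  define B where "B = {i. i < n \<and> N - 3 \<le> x i}"
  have B_sub: "B \<subseteq> {..<n}"
    by (auto simp: B_def)
  have f_nonneg: "0 \<le> f i" for i
    by (simp add: f_def quadratic_2_3_nonneg)
  have f_B: "(N - 5) * (N - 6) \<le> f i \<and> f i \<le> (N - 3) * (N - 4)" if "i \<in> B" for i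
  proof -
    have "N - 3 \<le> x i" "x i \<le> N - 1"
      using that below by (auto simp: B_def)
    moreover have "0 \<le> (x i - (N - 3)) * (x i + N - 8)" and "0 \<le> (N - 1 - x i) * (N - 6 + x i)"
      using calculation N by (intro mult_nonneg_nonneg; simp)+
    moreover have "f i - (N - 5) * (N - 6) = (x i - (N - 3)) * (x i + N - 8)"
      and "(N - 3) * (N - 4) - f i = (N - 1 - x i) * (N - 6 + x i)"
      by (simp_all add: f_def algebra_simps)
    ultimately show ?thesis
      by linarith
  qed
  have "card B \<le> 1"
  proof (rule at_most_one_large_term[of n f])
    have "0 \<le> (N - 14) * (N - 3)"
      using N by (intro mult_nonneg_nonneg) auto
    moreover have "2 * ((N - 5) * (N - 6)) - (N - 2) * (N - 3) = (N - 14) * (N - 3) + 12"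
      by (simp add: algebra_simps)
    ultimately show "(\<Sum>i<n. f i) < 2 * ((N - 5) * (N - 6))"
      using sum by (simp add: f_def)
  qed (auto simp: f_nonneg B_def f_B)
  moreover have "finite B"
    by (simp add: B_def)
  ultimately have sum_B: "(\<Sum>i\<in>B. f i) \<le> (N - 3) * (N - 4)"
  proof (cases "B = {}")
    case True
    show ?thesis
      unfolding True using N by simp
  next
    case False
    then obtain b where "b \<in> B"
      by blast
    with \<open>card B \<le> 1\<close> \<open>finite B\<close> have "B = {b}"
      by (auto simp: card_le_Suc0_iff_eq)
    then show ?thesis
      using f_B[OF \<open>b \<in> B\<close>] by simp
  qed
  have "4 * f i - 3 * (if i \<in> B then f i else 0) \<le> f i * (N - x i)" if "i < n" for i
  proof (cases "i \<in> B")
    case True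
    have "f i * 1 \<le> f i * (N - x i)"
      using below[OF that] by (intro mult_left_mono) (simp_all add: f_nonneg)
    then show ?thesis
      using True by simp
  next
    case False
    then have "4 \<le> N - x i"
      using that by (simp add: B_def)
    then have "f i * 4 \<le> f i * (N - x i)"
      by (intro mult_left_mono) (simp_all add: f_nonneg)
    then show ?thesis
      using False by (simp add: mult.commute)
  qed
  then have "(\<Sum>i<n. 4 * f i - 3 * (if i \<in> B then f i else 0)) \<le> (\<Sum>i<n. f i * (N - x i))"
    by (intro sum_mono) simp
  moreover have "(\<Sum>i<n. if i \<in> B then f i else 0) = (\<Sum>i\<in>B. f i)"
    using B_sub by (simp add: sum.inter_restrict[symmetric] inf.absorb2)
  ultimately have "4 * (\<Sum>i<n. f i) - 3 * (\<Sum>i\<in>B. f i) \<le> (\<Sum>i<n. f i * (N - x i))"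
    by (simp add: sum_subtractf flip: sum_distrib_left)
  then show ?thesis
    using sum sum_B by (simp add: f_def algebra_simps)
qed

text \<open>The polynomial \<open>(y - 2)(y - 3)\<close> is nonnegative on the integers and vanishes exactly at
  \<open>2\<close> and \<open>3\<close>; the three degree moments determine both its sum and its sum weighted by \<open>N - y\<close>.\<close>
lemma hub_from_degree_moments:
  fixes x :: "nat \<Rightarrow> int" and N q :: int
  assumes N: "15 \<le> N" and q: "1 \<le> q" and n: "int n = N + 1"
    and le_N: "\<And>i. i < n \<Longrightarrow> x i \<le> N"
    and S1: "(\<Sum>i<n. x i) = 4 * N - 2 * q"
    and S2: "(\<Sum>i<n. x i ^ 2) = N ^ 2 + 9 * N - 10 * q"
    and S3: "N ^ 3 - N ^ 2 + 28 * N - 36 * q \<le> (\<Sum>i<n. x i ^ 3)"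
  shows "\<exists>h<n. x h = N \<and> (\<forall>i<n. i \<noteq> h \<longrightarrow> x i \<in> {2, 3})"
proof -
  define f where "f y = (y - 2) * (y - 3)" for y :: int
  have card: "(\<Sum>i<n. (1::int)) = N + 1"
    using n by simp
  have sum_f: "(\<Sum>i<n. f (x i)) = (N - 2) * (N - 3)"
  proof -
    have "(\<Sum>i<n. f (x i)) = (\<Sum>i<n. x i ^ 2) - 5 * (\<Sum>i<n. x i) + 6 * (\<Sum>i<n. (1::int))"
      by (simp add: f_def sum_subtractf sum.distrib sum_distrib_left sum_distrib_right algebra_simps
          power2_eq_square)
    then show ?thesis
      using S1 S2 card by (simp add: algebra_simps power2_eq_square)
  qed
  have "(\<Sum>i<n. f (x i) * (N - x i)) = - (\<Sum>i<n. x i ^ 3) + (N + 5) * (\<Sum>i<n. x i ^ 2)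
      - (5 * N + 6) * (\<Sum>i<n. x i) + 6 * N * (\<Sum>i<n. (1::int))"
    by (simp add: f_def sum_subtractf sum.distrib sum_distrib_left sum_distrib_right algebra_simps
        power2_eq_square power3_eq_cube sum_negf)
  also have "\<dots> \<le> - (N ^ 3 - N ^ 2 + 28 * N - 36 * q) + (N + 5) * (N ^ 2 + 9 * N - 10 * q)
      - (5 * N + 6) * (4 * N - 2 * q) + 6 * N * (N + 1)"
    unfolding S1 S2 card using S3 by linarith
  also have "\<dots> = N ^ 2 - N - 2 * q"
    by (simp add: algebra_simps power2_eq_square power3_eq_cube)
  finally have weighted: "(\<Sum>i<n. f (x i) * (N - x i)) \<le> N ^ 2 - N - 2 * q" .
  have "\<exists>h<n. x h = N"
  proof (rule ccontr)
    assume "\<not> (\<exists>h<n. x h = N)"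
    then have "x i < N" if "i < n" for i
      using le_N[OF that] that by force
    then have "(N - 3) * (N + 4) \<le> (\<Sum>i<n. f (x i) * (N - x i))"
      using weighted_quadratic_sum_ge[of N n x] N sum_f by (simp add: f_def)
    with weighted have "(N - 3) * (N + 4) \<le> N ^ 2 - N - 2 * q"
      by linarith
    then show False
      using N q by (simp add: algebra_simps power2_eq_square)
  qed
  then obtain h where h: "h < n" "x h = N"
    by blast
  have "(\<Sum>i\<in>{..<n} - {h}. f (x i)) = 0"
    using sum_f h by (simp add: sum.remove f_def)
  then have "f (x i) = 0" if "i < n" "i \<noteq> h" for i
    using that sum_nonneg_eq_0_iff[of "{..<n} - {h}" "\<lambda>i. f (x i)"]
    by (simp add: f_def quadratic_2_3_nonneg)
  then show ?thesis
    using h by (auto simp: f_def)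
qed

section \<open>Graphs cospectral with the cone\<close>

lemma Q_cospectral_with_G_degree_sequence:
  assumes s: "3 \<le> s" and q: "1 \<le> q" and n: "n = 1 + s + 2 * q" and "16 \<le> n"
    and H: "simple_graph n H" and cospectral: "Q_spectrum n H = Q_spectrum n (G_adj s q)"
  shows "degree_sequence n H = degree_sequence n (G_adj s q)"
proof -
  define N where "N = s + 2 * q"
  let ?G = "G_adj s q"
  note G = G_simple[OF s n]
  note moments = Q_cospectral_degree_moments[OF H G cospectral]
  have G_moment: "(\<Sum>i<n. deg n ?G i ^ k) = N ^ k + 2 * q * 2 ^ k + s * 3 ^ k" for k
    using sum_degree_sequence[of "\<lambda>d. d ^ k" n ?G] by (simp add: degree_sequence_G[OF s n] N_def)
  have H1: "(\<Sum>i<n. deg n H i) = N + 4 * q + 3 * s"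
    using moments(2) G_moment[of 1] by simp
  have H2: "(\<Sum>i<n. deg n H i ^ 2) = N ^ 2 + 8 * q + 9 * s"
    using moments(3) G_moment[of 2] by simp
  have "3 * (\<Sum>i<n. deg n ?G i) \<le> closed_walks3 n ?G + 6 * N"
    using closed_walks3_ge_dominating_vertex[OF G, of 0] n by (simp add: G_adj_def cone_adj_def N_def)
  moreover have "closed_walks3 n H + (\<Sum>i<n. deg n H i) \<le> (\<Sum>i<n. deg n H i ^ 2)"
    by (rule closed_walks3_le_sum_deg_sq[OF H])
  ultimately have "N ^ 3 + 28 * N \<le> (\<Sum>i<n. deg n H i ^ 3) + N ^ 2 + 36 * q"
    using moments(4) G_moment[of 1] G_moment[of 3] H1 H2 by (simp add: N_def)
  then have H3: "int N ^ 3 - int N ^ 2 + 28 * int N - 36 * int q \<le> (\<Sum>i<n. int (deg n H i) ^ 3)"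
    by (simp flip: of_nat_power of_nat_sum)
  have "\<exists>h<n. int (deg n H h) = int N \<and> (\<forall>i<n. i \<noteq> h \<longrightarrow> int (deg n H i) \<in> {2, 3})"
  proof (rule hub_from_degree_moments[OF _ _ _ _ _ _ H3])
    show "(\<Sum>i<n. int (deg n H i)) = 4 * int N - 2 * int q"
      using H1 by (simp add: N_def flip: of_nat_sum)
    show "(\<Sum>i<n. int (deg n H i) ^ 2) = int N ^ 2 + 9 * int N - 10 * int q"
      using arg_cong[OF H2, of int] by (simp add: N_def algebra_simps power2_eq_square)
    show "int (deg n H i) \<le> int N" if "i < n" for i
      using deg_le_n_minus_1[OF H that] n by (simp add: N_def)
  qed (use \<open>16 \<le> n\<close> n q in \<open>simp_all add: N_def\<close>)
  then obtain h where "h < n" "deg n H h = N" and "\<And>i. i < n \<Longrightarrow> i \<noteq> h \<Longrightarrow> deg n H i \<in> {2, 3}"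
    by auto
  then have "degree_sequence n H = add_mset N (replicate_mset (2 * q) 2 + replicate_mset s 3)"
    using degree_sequence_hub_two_values[of h n H 2 3 "2 * q" s] H1 n by (simp add: N_def)
  then show ?thesis
    by (simp add: degree_sequence_G[OF s n] N_def)
qed

theorem lemma4p1:
  fixes q s n m :: nat and EH :: "nat \<Rightarrow> nat \<Rightarrow> bool"
  assumes "q \<ge> 1" and "s \<ge> 3"
    and "n = 1 + s + 2 * q" and "n \<ge> 16"
    and "simple_graph m EH"
    and "Q_spectrum m EH = Q_spectrum n (G_adj s q)"
  shows "degree_sequence m EH = degree_sequence n (G_adj s q)
       \<and> triangles m EH = triangles n (G_adj s q)"
proof -
  have G: "simple_graph n (G_adj s q)"
    using G_simple assms(2,3) .
  have "m = n"
    using Q_cospectral_degree_moments(1)[OF assms(5) G assms(6)] .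
  with assms have H: "simple_graph n EH" and cospectral: "Q_spectrum n EH = Q_spectrum n (G_adj s q)"
    by simp_all
  have degrees: "degree_sequence n EH = degree_sequence n (G_adj s q)"
    using Q_cospectral_with_G_degree_sequence[OF assms(2,1,3,4) H cospectral] .
  then have "(\<Sum>i<n. deg n EH i ^ 3) = (\<Sum>i<n. deg n (G_adj s q) i ^ 3)"
    using sum_degree_sequence[of "\<lambda>d. d ^ 3" n] by metis
  then have "closed_walks3 n EH = closed_walks3 n (G_adj s q)"
    using Q_cospectral_degree_moments(4)[OF H G cospectral] by simp
  then have "triangles n EH = triangles n (G_adj s q)"
    using closed_walks3_eq_triangles[OF H] closed_walks3_eq_triangles[OF G] by simp
  with degrees show ?thesis
    using \<open>m = n\<close> by simp
qed

end
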